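(* Let $V\in\mathcal{R}$. For every generating sequence $(u_m)$ of $V$, the sequence $(\rho_{u_m})$ is nondecreasing, so $\lim_{m\to\infty}\rho_{u_m}$ exists in $[0,+\infty]$; moreover this limit is the same for all generating sequences of $V$ (in particular it equals $\lim_n\rho_{v_n}$ for the canonical generating sequence $(v_n)$ of $V$).
   Context: $\mathcal{F}$ is the set of finite words over $\{0,1\}$ that start and end with $0$. For a finite word $\alpha$, $Y(\alpha)$, $Z(\alpha)$ are the numbers of $1$s and $0$s in $\alpha$ and $\rho_\alpha=Y(\alpha)/Z(\alpha)$. For $u,v\in\mathcal{F}$, $u$ is built from $v$ if $u=v1^{a_1}v\cdots v1^{a_{q-1}}v$ for some $q\ge2$ and nonnegative integers $a_i$; it is built simply from $v$ if moreover $a_1=\dots=a_{q-1}$. A generating sequence is a sequence $(v_n)$ in $\mathcal{F}$ with $v_0=0$ and each $v_{n+1}$ built from $v_n$. An infinite word $V\in\{0,1\}^{\mathbb{N}}$ is a rank one word if there is a generating sequence $(v_n)$ with $V\upharpoonright\mathrm{lh}(v_n)=v_n$ for all $n$; $\mathcal{R}$ is the set of rank one words that are aperiodic (nondegenerate). $V$ is built from $v\in\mathcal{F}$ if $V=v1^{a_1}v1^{a_2}v\cdots$ for nonnegative integers $a_i$. An element $v\in\mathcal{F}$ belongs to the canonical generating sequence of $V$ if $V$ is built from $v$ and there are no $u,w\in\mathcal{F}$ with $\mathrm{lh}(u)<\mathrm{lh}(v)<\mathrm{lh}(w)$, $V$ built from both $u$ and $w$, $w$ built from $u$, $u$ built from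 $v$, and $w$ built simply from $u$; these elements, listed by increasing length, form a generating sequence of $V$ (the canonical generating sequence). *)

theory Defs
  imports "HOL-Analysis.Analysis"
begin

text \<open>Finite words over {0,1} are bool lists (False = 0, True = 1);
infinite words are functions nat => bool.\<close>

definition inF :: "bool list \<Rightarrow> bool" where
  "inF w \<longleftrightarrow> w \<noteq> [] \<and> hd w = False \<and> last w = False"

definition Yc :: "bool list \<Rightarrow> nat" where
  "Yc w = length (filter (\<lambda>b. b) w)"

definition Zc :: "bool list \<Rightarrow> nat" where
  "Zc w = length (filter (\<lambda>b. \<not> b) w)"

definition rho :: "bool list \<Rightarrow> real" where
  "rho w = real (Yc w) / real (Zc w)"

text \<open>u = v 1^(a_1) v ... 1^(a_(q-1)) v with q >= 2 (as lists: as = [a_1,...,a_(q-1)], nonempty).\<close>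
definition built_from :: "bool list \<Rightarrow> bool list \<Rightarrow> bool" where
  "built_from u v \<longleftrightarrow>
     (\<exists>as :: nat list. as \<noteq> [] \<and> u = v @ concat (map (\<lambda>a. replicate a True @ v) as))"

definition built_simply :: "bool list \<Rightarrow> bool list \<Rightarrow> bool" where
  "built_simply u v \<longleftrightarrow>
     (\<exists>q a :: nat. q \<ge> 2 \<and> u = v @ concat (replicate (q - 1) (replicate a True @ v)))"

definition is_prefix :: "bool list \<Rightarrow> (nat \<Rightarrow> bool) \<Rightarrow> bool" where
  "is_prefix w V \<longleftrightarrow> (\<forall>i < length w. V i = w ! i)"

definition generating_seq :: "(nat \<Rightarrow> bool list) \<Rightarrow> bool" where
  "generating_seq vs \<longleftrightarrow>
     vs 0 = [False] \<and> (\<forall>n. inF (vs n)) \<and> (\<forall>n. built_from (vs (Suc n)) (vs n))"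

definition generating_seq_of :: "(nat \<Rightarrow> bool) \<Rightarrow> (nat \<Rightarrow> bool list) \<Rightarrow> bool" where
  "generating_seq_of V vs \<longleftrightarrow> generating_seq vs \<and> (\<forall>n. is_prefix (vs n) V)"

definition rank_one :: "(nat \<Rightarrow> bool) \<Rightarrow> bool" where
  "rank_one V \<longleftrightarrow> (\<exists>vs. generating_seq_of V vs)"

definition aperiodic :: "(nat \<Rightarrow> bool) \<Rightarrow> bool" where
  "aperiodic V \<longleftrightarrow> \<not> (\<exists>p N. p > 0 \<and> (\<forall>i \<ge> N. V (i + p) = V i))"

definition R_words :: "(nat \<Rightarrow> bool) set" where
  "R_words = {V. rank_one V \<and> aperiodic V}"

definition inf_built_from :: "(nat \<Rightarrow> bool) \<Rightarrow> bool list \<Rightarrow> bool" where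
  "inf_built_from V v \<longleftrightarrow>
     (\<exists>a :: nat \<Rightarrow> nat. \<forall>k.
        is_prefix (v @ concat (map (\<lambda>i. replicate (a i) True @ v) [0..<k])) V)"

definition canonical_set :: "(nat \<Rightarrow> bool) \<Rightarrow> bool list set" where
  "canonical_set V = {v. inF v \<and> inf_built_from V v \<and>
     \<not> (\<exists>u w. inF u \<and> inF w \<and> length u < length v \<and> length v < length w \<and>
            inf_built_from V u \<and> inf_built_from V w \<and>
            built_from w u \<and> built_from v u \<and> built_simply w u)}"

end

theory Submission
  imports Defs
begin

text \<open>If \<open>V\<close> has arbitrarily long prefixes of the form \<open>w 1\<^sup>a\<^sub>1 w \<dots> 1\<^sup>a\<^sub>k w\<close>, then every
prefix \<open>P\<close> of \<open>V\<close> ending in \<open>0\<close> has, for some \<open>k\<close>, at most \<open>(k + 1) Z(w)\<close> zeros and at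
least \<open>k Y(w)\<close> ones; so a long \<open>P\<close> has either large \<open>k\<close> or many ones, and in both cases
\<open>\<rho>\<^sub>P\<close> exceeds any given \<open>r < \<rho>\<^sub>w\<close>.  Hence along every sequence of such words of unbounded
length, \<open>\<rho>\<close> converges to the supremum of \<open>\<rho>\<^sub>w\<close> over all such \<open>w\<close>.  The words of any
generating sequence and of the canonical one are of this kind, which gives the common
limit; monotonicity holds since \<open>\<rho>\<close> cannot drop when passing to a word built from \<open>v\<close>.\<close>

lemma Yc_append [simp]: "Yc (xs @ ys) = Yc xs + Yc ys"
  by (simp add: Yc_def)

lemma Zc_append [simp]: "Zc (xs @ ys) = Zc xs + Zc ys"
  by (simp add: Zc_def)

lemma Yc_replicate_True [simp]: "Yc (replicate a True) = a"
  by (simp add: Yc_def)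

lemma Zc_replicate_True [simp]: "Zc (replicate a True) = 0"
  by (simp add: Zc_def)

lemma length_eq_Yc_plus_Zc: "length xs = Yc xs + Zc xs"
  by (induction xs) (auto simp: Yc_def Zc_def)

lemma rho_nonneg: "0 \<le> rho w"
  by (simp add: rho_def)

lemma Zc_pos_if_last_False:
  assumes "P \<noteq> []" "last P = False"
  shows "1 \<le> Zc P"
proof -
  have "Zc P = Zc (butlast P) + Zc [last P]"
    by (metis Zc_append append_butlast_last_id assms(1))
  then show ?thesis
    using assms(2) by (simp add: Zc_def)
qed

lemma Zc_pos_if_inF: "inF w \<Longrightarrow> 1 \<le> Zc w"
  by (rule Zc_pos_if_last_False) (auto simp: inF_def)

definition block_word :: "bool list \<Rightarrow> nat list \<Rightarrow> bool list" where
  "block_word w as = w @ concat (map (\<lambda>a. replicate a True @ w) as)"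

definition block_words :: "bool list \<Rightarrow> bool list set" where
  "block_words w = range (block_word w)"

definition has_long_block_prefixes :: "(nat \<Rightarrow> bool) \<Rightarrow> bool list \<Rightarrow> bool" where
  "has_long_block_prefixes V w \<longleftrightarrow>
     inF w \<and> (\<forall>N. \<exists>Q \<in> block_words w. N \<le> length Q \<and> is_prefix Q V)"

definition rho_limit :: "(nat \<Rightarrow> bool) \<Rightarrow> ereal" where
  "rho_limit V = (SUP w \<in> {w. has_long_block_prefixes V w}. ereal (rho w))"

lemma block_word_Nil [simp]: "block_word w [] = w"
  by (simp add: block_word_def)

lemma block_word_snoc: "block_word w (as @ [a]) = block_word w as @ replicate a True @ w"
  by (simp add: block_word_def)

lemma built_from_iff_block_word: "built_from u v \<longleftrightarrow> (\<exists>as. as \<noteq> [] \<and> u = block_word v as)"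
  by (simp add: built_from_def block_word_def)

lemma Zc_block_word: "Zc (block_word w as) = (length as + 1) * Zc w"
  by (induction as rule: rev_induct) (auto simp: block_word_snoc)

lemma Yc_block_word_ge: "(length as + 1) * Yc w \<le> Yc (block_word w as)"
  by (induction as rule: rev_induct) (auto simp: block_word_snoc)

lemma length_block_word_ge:
  assumes "w \<noteq> []"
  shows "length as \<le> length (block_word w as)"
proof (induction as rule: rev_induct)
  case (snoc a as)
  obtain b bs where "w = b # bs"
    using assms by (cases w) auto
  then show ?case
    using snoc by (simp add: block_word_snoc)
qed simp

lemma prefix_of_block_word_counts:
  assumes "block_word w as = P @ zs"
  shows "\<exists>k. Zc P \<le> (k + 1) * Zc w \<and> k * Yc w \<le> Yc P"
  using assms
proof (induction as arbitrary: P zs rule: rev_induct)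
  case Nil
  then have "Zc P \<le> Zc w"
    using Zc_append[of P zs] by simp
  then show ?case
    by (intro exI[of _ 0]) simp
next
  case (snoc a as)
  then have "P @ zs = block_word w as @ (replicate a True @ w)"
    by (simp add: block_word_snoc)
  then obtain us where
    "block_word w as = P @ us \<or> (P = block_word w as @ us \<and> replicate a True @ w = us @ zs)"
    unfolding append_eq_append_conv2 by metis
  then show ?case
  proof
    assume "block_word w as = P @ us"
    then show ?thesis
      using snoc.IH by blast
  next
    assume P: "P = block_word w as @ us \<and> replicate a True @ w = us @ zs"
    then have "Zc us \<le> Zc w"
      using Zc_append[of us zs] Zc_append[of "replicate a True" w] by simp
    then show ?thesis
      using P Zc_block_word[of w as] Yc_block_word_ge[of as w]
      by (intro exI[of _ "length as + 1"]) auto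
  qed
qed

lemma block_words_join:
  assumes "x \<in> block_words w" "y \<in> block_words w"
  shows "x @ replicate a True @ y \<in> block_words w"
proof -
  obtain as bs where "x = block_word w as" "y = block_word w bs"
    using assms by (auto simp: block_words_def)
  then have "x @ replicate a True @ y = block_word w (as @ [a] @ bs)"
    by (simp add: block_word_def)
  then show ?thesis
    by (simp add: block_words_def)
qed

lemma block_words_block_word:
  assumes "v \<in> block_words w" "z \<in> block_words w"
  shows "z @ concat (map (\<lambda>a. replicate a True @ v) as) \<in> block_words w"
  using assms(2)
proof (induction as arbitrary: z)
  case (Cons a as)
  then have "(z @ replicate a True @ v) @ concat (map (\<lambda>a. replicate a True @ v) as) \<in> block_words w"
    using assms(1) block_words_join by blast
  then show ?case
    by simp
qed simp

lemma block_words_refl: "w \<in> block_words w"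
  by (metis block_word_Nil block_words_def rangeI)

lemma block_words_built_from: "v \<in> block_words w \<Longrightarrow> built_from u v \<Longrightarrow> u \<in> block_words w"
  unfolding built_from_iff_block_word block_word_def using block_words_block_word by blast

lemma rho_mono_built_from:
  assumes "inF v" "built_from u v"
  shows "rho v \<le> rho u"
proof -
  obtain as where u: "u = block_word v as"
    using assms(2) by (auto simp: built_from_iff_block_word)
  define q where "q = real (length as + 1)"
  have Zc_u: "real (Zc u) = q * real (Zc v)"
    by (simp only: q_def u Zc_block_word of_nat_mult)
  have Yc_u: "q * real (Yc v) \<le> real (Yc u)"
    using u Yc_block_word_ge by (metis of_nat_le_iff of_nat_mult q_def)
  have "q > 0" "real (Zc v) > 0"
    using Zc_pos_if_inF[OF assms(1)] by (auto simp: q_def)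
  then have "rho v = (q * real (Yc v)) / (q * real (Zc v))"
    by (simp add: rho_def)
  also have "\<dots> \<le> real (Yc u) / (q * real (Zc v))"
    using Yc_u \<open>q > 0\<close> by (intro divide_right_mono) auto
  also have "\<dots> = rho u"
    using Zc_u by (simp add: rho_def)
  finally show ?thesis .
qed

lemma generating_seq_block_words:
  assumes "generating_seq us" "m \<le> n"
  shows "us n \<in> block_words (us m)"
  using assms(2)
proof (induction n rule: dec_induct)
  case base
  then show ?case
    by (rule block_words_refl)
next
  case (step n)
  then show ?case
    using assms(1) block_words_built_from by (auto simp: generating_seq_def)
qed

lemma length_less_if_built_from: "v \<noteq> [] \<Longrightarrow> built_from u v \<Longrightarrow> length v < length u"
  by (auto simp: built_from_def neq_Nil_conv)

lemma generating_seq_length_gt: "generating_seq us \<Longrightarrow> n < length (us n)"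
proof (induction n)
  case (Suc n)
  then have "length (us n) < length (us (Suc n))"
    by (intro length_less_if_built_from) (auto simp: generating_seq_def inF_def)
  then show ?case
    using Suc by simp
qed (simp add: generating_seq_def)

lemma generating_seq_of_long_block_prefixes:
  assumes "generating_seq_of V us"
  shows "has_long_block_prefixes V (us m)"
proof -
  have us: "generating_seq us" "\<And>n. is_prefix (us n) V"
    using assms by (auto simp: generating_seq_of_def)
  have "inF (us m)"
    using us(1) by (simp add: generating_seq_def)
  moreover have "us (m + N) \<in> block_words (us m) \<and> N \<le> length (us (m + N))" for N
    using generating_seq_block_words[OF us(1)] generating_seq_length_gt[OF us(1), of "m + N"]
    by simp
  ultimately show ?thesis
    using us(2) by (auto simp: has_long_block_prefixes_def)
qed

lemma inf_built_from_long_block_prefixes: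
  assumes "inF v" "inf_built_from V v"
  shows "has_long_block_prefixes V v"
proof -
  obtain a where a: "\<And>k. is_prefix (block_word v (map a [0..<k])) V"
    using assms(2) by (auto simp: inf_built_from_def block_word_def comp_def)
  have "N \<le> length (block_word v (map a [0..<N]))" for N
    using length_block_word_ge[of v "map a [0..<N]"] assms(1) by (simp add: inF_def)
  then show ?thesis
    using a assms(1) by (auto simp: has_long_block_prefixes_def block_words_def)
qed

lemma has_long_block_prefixes_is_prefix:
  assumes "has_long_block_prefixes V w"
  shows "is_prefix w V"
proof -
  obtain as where "is_prefix (block_word w as) V"
    using assms by (auto simp: has_long_block_prefixes_def block_words_def)
  then show ?thesis
    by (auto simp: is_prefix_def block_word_def nth_append)
qed

lemma is_prefix_append_drop:
  assumes "is_prefix P V" "is_prefix Q V" "length P \<le> length Q"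
  shows "Q = P @ drop (length P) Q"
proof -
  have "take (length P) Q = P"
    using assms by (intro nth_equalityI) (auto simp: is_prefix_def)
  then show ?thesis
    by (metis append_take_drop_id)
qed

text \<open>Here \<open>z, y\<close> count the zeros and ones of a prefix of a block word over a word with
\<open>Z\<close> zeros and \<open>Y\<close> ones.  For \<open>k \<ge> K\<close> the surplus \<open>K (Y - r Z)\<close> absorbs the extra
copy of \<open>w\<close>; for \<open>k < K\<close> the prefix has few zeros, so its length forces many ones.\<close>

lemma ratio_lower_bound_arith:
  fixes r Y Z y z :: real and k K :: nat
  assumes "0 \<le> r" "0 \<le> Z" "r * Z < real K * (Y - r * Z)"
    and "z \<le> (real k + 1) * Z" "real k * Y \<le> y" "real K * Z + r * (real K * Z) < y + z"
  shows "r * z < y"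
proof (cases "K \<le> k")
  case True
  have "0 < real K * (Y - r * Z)"
    using assms(1-3) mult_nonneg_nonneg[of r Z] by linarith
  then have "0 < Y - r * Z"
    by (simp add: zero_less_mult_iff)
  have "r * z \<le> r * ((real k + 1) * Z)"
    using assms(1,4) by (rule mult_left_mono[rotated])
  also have "\<dots> = r * Z + real k * (r * Z)"
    by (simp add: algebra_simps)
  also have "\<dots> < real K * (Y - r * Z) + real k * (r * Z)"
    using assms(3) by simp
  also have "\<dots> \<le> real k * (Y - r * Z) + real k * (r * Z)"
    using True \<open>0 < Y - r * Z\<close> by (simp add: mult_right_mono)
  also have "\<dots> \<le> y"
    using assms(5) by (simp add: algebra_simps)
  finally show ?thesis .
next
  case False
  then have "(real k + 1) * Z \<le> real K * Z"
    using assms(2) by (intro mult_right_mono) auto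
  then have "z \<le> real K * Z"
    using assms(4) by linarith
  then have "r * z \<le> r * (real K * Z)"
    using assms(1) by (rule mult_left_mono)
  then show ?thesis
    using assms(6) \<open>z \<le> real K * Z\<close> by linarith
qed

lemma rho_eventually_gt:
  assumes w: "has_long_block_prefixes V w" and r: "0 \<le> r" "r < rho w"
  obtains N where
    "\<And>P. is_prefix P V \<Longrightarrow> P \<noteq> [] \<Longrightarrow> last P = False \<Longrightarrow> N \<le> length P \<Longrightarrow> r < rho P"
proof -
  define Y where "Y = real (Yc w)"
  define Z where "Z = real (Zc w)"
  have "Z > 0"
    using w Zc_pos_if_inF[of w] by (simp add: Z_def has_long_block_prefixes_def)
  then have "0 < Y - r * Z"
    using r(2) by (simp add: rho_def Y_def Z_def pos_less_divide_eq)
  then obtain K :: nat where K: "r * Z < real K * (Y - r * Z)"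
    using reals_Archimedean3 by blast
  show ?thesis
  proof (rule that[of "K * Zc w + nat \<lceil>r * (real K * Z)\<rceil> + 1"])
    fix P
    assume P: "is_prefix P V" "P \<noteq> []" "last P = False"
      and long: "K * Zc w + nat \<lceil>r * (real K * Z)\<rceil> + 1 \<le> length P"
    obtain as where "is_prefix (block_word w as) V" "length P \<le> length (block_word w as)"
      using w by (auto simp: has_long_block_prefixes_def block_words_def)
    then have "block_word w as = P @ drop (length P) (block_word w as)"
      using P(1) is_prefix_append_drop by blast
    then obtain k where "Zc P \<le> (k + 1) * Zc w" "k * Yc w \<le> Yc P"
      using prefix_of_block_word_counts by blast
    then have "real (Zc P) \<le> (real k + 1) * Z" "real k * Y \<le> real (Yc P)"
      unfolding Y_def Z_def by (metis of_nat_1 of_nat_add of_nat_le_iff of_nat_mult)+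
    moreover have "real K * Z + r * (real K * Z) < real (Yc P) + real (Zc P)"
    proof -
      have "real (K * Zc w) + real (nat \<lceil>r * (real K * Z)\<rceil>) + 1 \<le> real (Yc P) + real (Zc P)"
        using long length_eq_Yc_plus_Zc[of P] by (metis of_nat_1 of_nat_add of_nat_le_iff)
      moreover have "real (K * Zc w) = real K * Z"
        by (simp add: Z_def)
      ultimately show ?thesis
        using real_nat_ceiling_ge[of "r * (real K * Z)"] by linarith
    qed
    ultimately have "r * real (Zc P) < real (Yc P)"
      by (rule ratio_lower_bound_arith[OF r(1) less_imp_le[OF \<open>Z > 0\<close>] K])
    moreover have "real (Zc P) > 0"
      using Zc_pos_if_last_False[OF P(2,3)] by simp
    ultimately show "r < rho P"
      by (simp add: rho_def pos_less_divide_eq)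
  qed
qed

lemma tendsto_rho_limit:
  assumes w: "\<And>n. has_long_block_prefixes V (ws n)" and long: "\<And>n. n \<le> length (ws n)"
  shows "(\<lambda>n. ereal (rho (ws n))) \<longlonglongrightarrow> rho_limit V"
proof (rule order_tendstoI)
  fix a
  assume "rho_limit V < a"
  moreover have "ereal (rho (ws n)) \<le> rho_limit V" for n
    unfolding rho_limit_def using w by (intro SUP_upper) auto
  ultimately show "\<forall>\<^sub>F n in sequentially. ereal (rho (ws n)) < a"
    by (meson le_less_trans always_eventually)
next
  fix a
  assume "a < rho_limit V"
  then obtain v where v: "has_long_block_prefixes V v" "a < ereal (rho v)"
    by (auto simp: rho_limit_def less_SUP_iff)
  show "\<forall>\<^sub>F n in sequentially. a < ereal (rho (ws n))"
  proof (cases a)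
    case (real r)
    show ?thesis
    proof (cases "0 \<le> r")
      case True
      obtain N where N:
        "\<And>P. is_prefix P V \<Longrightarrow> P \<noteq> [] \<Longrightarrow> last P = False \<Longrightarrow> N \<le> length P \<Longrightarrow> r < rho P"
        using rho_eventually_gt[OF v(1) True] v(2) real by auto
      have "r < rho (ws n)" if "N \<le> n" for n
        using N[of "ws n"] w[of n] has_long_block_prefixes_is_prefix[OF w] long[of n] that
        by (simp add: has_long_block_prefixes_def inF_def)
      then show ?thesis
        using real by (auto simp: eventually_sequentially)
    next
      case False
      then have "r < rho (ws n)" for n
        using rho_nonneg[of "ws n"] by linarith
      then show ?thesis
        using real by simp
    qed
  qed (use v in auto)
qed

theorem mainTheorem3:
  fixes V :: "nat \<Rightarrow> bool"
  assumes "V \<in> R_words"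
  shows "\<exists>L :: ereal.
           (\<forall>us. generating_seq_of V us \<longrightarrow>
                  mono (\<lambda>m. rho (us m)) \<and> (\<lambda>m. ereal (rho (us m))) \<longlonglongrightarrow> L)
         \<and> (\<forall>vs. strict_mono (\<lambda>n. length (vs n)) \<and> range vs = canonical_set V \<longrightarrow>
                  (\<lambda>n. ereal (rho (vs n))) \<longlonglongrightarrow> L)"
proof (intro exI[of _ "rho_limit V"] conjI allI impI)
  fix us :: "nat \<Rightarrow> bool list"
  assume us: "generating_seq_of V us"
  then have "generating_seq us"
    by (simp add: generating_seq_of_def)
  then show "mono (\<lambda>m. rho (us m))"
    by (intro incseq_SucI) (simp add: generating_seq_def rho_mono_built_from)
  show "(\<lambda>m. ereal (rho (us m))) \<longlonglongrightarrow> rho_limit V"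
    using tendsto_rho_limit generating_seq_of_long_block_prefixes[OF us]
      generating_seq_length_gt[OF \<open>generating_seq us\<close>] by (meson less_imp_le)
next
  fix vs :: "nat \<Rightarrow> bool list"
  assume vs: "strict_mono (\<lambda>n. length (vs n)) \<and> range vs = canonical_set V"
  then have "vs n \<in> canonical_set V" for n
    by blast
  then have "has_long_block_prefixes V (vs n)" for n
    using inf_built_from_long_block_prefixes by (simp add: canonical_set_def)
  moreover have "n \<le> length (vs n)" for n
    using vs strict_mono_imp_increasing by blast
  ultimately show "(\<lambda>n. ereal (rho (vs n))) \<longlonglongrightarrow> rho_limit V"
    by (rule tendsto_rho_limit)
qed

end
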